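(* Let $n\ge 2$ and let $\theta$ be a Schwartz function on $\mathbb{R}^n$ whose Fourier transform $\widehat\theta$ is supported in $\mathcal{A}_{4^{-n-3},4\sqrt n}$ and equals $1$ on $\mathcal{A}_{4^{-n-2},2\sqrt n}$. There exists $\epsilon_1>0$ such that for every sufficiently large $R$ the following holds: for each $x\in\mathcal{A}_{4^{-n-2},2\sqrt n}$, each $t\in(0,1)$ and each $\xi'\in\mathbb{R}^n$ with $|\xi'|\le\epsilon_1R$, $$\Big|\int_{\mathbb{R}^n} e^{2\pi i\left[(x-\frac{2t\xi'}{R})\cdot\xi-\frac{t}{R}|\xi|^2\right]}\theta(\xi)\,d\xi-1\Big|<\frac12.$$
   Context: For $0<u<v$, $\mathcal{A}_{u,v}=\{x\in\mathbb{R}^n: u<|x|<v\}$. The Fourier transform is $\widehat f(\xi)=\int f(x)e^{-2\pi i x\cdot\xi}dx$. *)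

theory Defs
  imports "HOL-Analysis.Analysis"
begin

definition annulus :: "real \<Rightarrow> real \<Rightarrow> (real^'n) set" where
  "annulus u v = {x. u < norm x \<and> norm x < v}"

definition fourier :: "(real^'n \<Rightarrow> complex) \<Rightarrow> real^'n \<Rightarrow> complex" where
  "fourier f \<xi> = (\<integral>x. f x * cis (- 2 * pi * (x \<bullet> \<xi>)) \<partial>lborel)"

text \<open>Schwartz functions: there is a family D indexed by multi-indices alpha with
  D 0 = f, the partial derivative of D alpha in direction i equal to D (alpha + e_i)
  (so all partial derivatives of all orders exist), and every x^beta D^alpha f bounded.\<close>
definition schwartz :: "(real^'n \<Rightarrow> complex) \<Rightarrow> bool" where
  "schwartz f \<longleftrightarrow> (\<exists>D :: ('n \<Rightarrow> nat) \<Rightarrow> real^'n \<Rightarrow> complex.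
      D (\<lambda>_. 0) = f \<and>
      (\<forall>\<alpha> x i. ((\<lambda>s::real. D \<alpha> (x + s *\<^sub>R axis i 1))
                   has_vector_derivative D (\<alpha>(i := Suc (\<alpha> i))) x) (at 0)) \<and>
      (\<forall>\<alpha> \<beta>. \<exists>C. \<forall>x. (\<Prod>i\<in>UNIV. \<bar>x $ i\<bar> ^ \<beta> i) * norm (D \<alpha> x) \<le> C))"

end

theory Submission
  imports Defs
begin

text \<open>For x in the annulus, -x lies in it too, so with t = 0 the integral is the Fourier transform
  of \<theta> at -x, i.e. 1. Otherwise the phase differs from 2\<pi> x\<cdot>\<xi> by at most
  2\<pi> (|2t\<xi>'/R| + t/R) (1 + |\<xi>|^2) \<le> 6\<pi>\<epsilon> (1 + |\<xi>|^2) once R \<ge> 1/\<epsilon>. Since cis is 1-Lipschitz and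
  a Schwartz function has finite moment M = \<integral> (1 + |\<xi>|^2) |\<theta> \<xi>| d\<xi>, the integral stays within
  6\<pi>\<epsilon>M < 1/2 of 1 for small \<epsilon>.\<close>

lemma norm_diff_le_of_vector_derivative_bound:
  fixes f :: "real \<Rightarrow> 'b::real_normed_vector"
  assumes "\<And>s. (f has_vector_derivative f' s) (at s)" and "\<And>s. norm (f' s) \<le> C"
  shows "norm (f b - f a) \<le> C * \<bar>b - a\<bar>"
proof -
  have "norm (f b - f a) \<le> C * norm (b - a)"
    using assms by (intro differentiable_bound[where S=UNIV and f'="\<lambda>s h. h *\<^sub>R f' s"])
      (auto simp: has_vector_derivative_def intro!: onorm_le, metis abs_ge_zero mult.commute mult_right_mono)
  then show ?thesis by simp
qed

lemma norm_cis_diff_le: "norm (cis a - cis b) \<le> \<bar>a - b\<bar>"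
  using norm_diff_le_of_vector_derivative_bound[where f=cis and f'="\<lambda>s. \<i> * cis s" and C=1]
    has_derivative_cis[OF has_derivative_ident, of _ UNIV]
  by (auto simp: has_vector_derivative_def norm_mult)

lemma norm_diff_along_axis_le:
  fixes f :: "real^'n \<Rightarrow> 'b::real_normed_vector"
  assumes deriv: "\<And>x. ((\<lambda>s. f (x + s *\<^sub>R axis i 1)) has_vector_derivative g x) (at 0)"
    and bound: "\<And>x. norm (g x) \<le> C"
  shows "norm (f (x + s *\<^sub>R axis i 1) - f x) \<le> C * \<bar>s\<bar>"
proof -
  have "((\<lambda>s. f (x + s *\<^sub>R axis i 1)) has_vector_derivative g (x + u *\<^sub>R axis i 1)) (at u)" for u
  proof -
    have "((\<lambda>s. s - u) has_vector_derivative 1) (at u)"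
      by (auto intro!: derivative_eq_intros)
    moreover have "((\<lambda>s. f ((x + u *\<^sub>R axis i 1) + s *\<^sub>R axis i 1))
        has_vector_derivative g (x + u *\<^sub>R axis i 1)) (at ((\<lambda>s. s - u) u))"
      using deriv by simp
    ultimately have "((\<lambda>s. f ((x + u *\<^sub>R axis i 1) + s *\<^sub>R axis i 1)) \<circ> (\<lambda>s. s - u)
           has_vector_derivative g (x + u *\<^sub>R axis i 1)) (at u)"
      using vector_diff_chain_at by fastforce
    then show ?thesis
      by (simp add: o_def algebra_simps)
  qed
  then show ?thesis
    using norm_diff_le_of_vector_derivative_bound[where f="\<lambda>s. f (x + s *\<^sub>R axis i 1)" and a=0 and b=s]
      bound by fastforce
qed

lemma lipschitz_on_of_bounded_partial_derivatives:
  fixes f :: "real^'n \<Rightarrow> 'b::real_normed_vector"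
  assumes deriv: "\<And>x i. ((\<lambda>s. f (x + s *\<^sub>R axis i 1)) has_vector_derivative g i x) (at 0)"
    and bound: "\<And>i x. norm (g i x) \<le> C i"
  shows "(\<Sum>i\<in>UNIV. C i)-lipschitz_on UNIV f"
proof -
  have C_nonneg: "0 \<le> C i" for i
    using bound[of i 0] norm_ge_zero order_trans by blast
  note along_axis = norm_diff_along_axis_le[OF deriv bound]
  \<comment> \<open>Move from x to y one coordinate at a time, through the points that agree with y on S.\<close>
  define z where "z S x y = (\<chi> j. if j \<in> S then y $ j else x $ j)" for S and x y :: "real^'n"
  have telescope: "norm (f (z S x y) - f x) \<le> (\<Sum>i\<in>S. C i * \<bar>y $ i - x $ i\<bar>)"
    if "finite S" for S x y
    using that
  proof (induction S rule: finite_induct)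
    case empty
    have "z {} x y = x" by (simp add: z_def vec_eq_iff)
    then show ?case by simp
  next
    case (insert i S)
    have step: "z (insert i S) x y = z S x y + (y $ i - x $ i) *\<^sub>R axis i 1"
      using insert.hyps by (auto simp: z_def vec_eq_iff axis_def)
    have "norm (f (z (insert i S) x y) - f x)
        \<le> norm (f (z S x y + (y $ i - x $ i) *\<^sub>R axis i 1) - f (z S x y)) + norm (f (z S x y) - f x)"
      unfolding step by (rule norm_diff_triangle_le) auto
    also have "\<dots> \<le> C i * \<bar>y $ i - x $ i\<bar> + (\<Sum>i\<in>S. C i * \<bar>y $ i - x $ i\<bar>)"
      using along_axis insert.IH by (rule add_mono)
    finally show ?case
      using insert.hyps by simp
  qed
  show ?thesis
  proof (rule lipschitz_onI)
    fix x y :: "real^'n"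
    have "dist (f y) (f x) \<le> (\<Sum>i\<in>UNIV. C i * \<bar>y $ i - x $ i\<bar>)"
      using telescope[of UNIV x y] by (simp add: z_def dist_norm)
    also have "\<dots> \<le> (\<Sum>i\<in>UNIV. C i * dist y x)"
      using C_nonneg component_le_norm_cart[of "y - x"] by (intro sum_mono mult_left_mono) (auto simp: dist_norm)
    finally show "dist (f x) (f y) \<le> (\<Sum>i\<in>UNIV. C i) * dist x y"
      by (simp add: sum_distrib_right dist_commute)
  qed (simp add: sum_nonneg C_nonneg)
qed

lemma schwartz_continuous:
  fixes f :: "real^'n \<Rightarrow> complex"
  assumes "schwartz f"
  shows "continuous_on UNIV f"
proof -
  obtain D :: "('n \<Rightarrow> nat) \<Rightarrow> real^'n \<Rightarrow> complex" where "D (\<lambda>_. 0) = f"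
    and deriv: "\<And>\<alpha> x i. ((\<lambda>s::real. D \<alpha> (x + s *\<^sub>R axis i 1))
                   has_vector_derivative D (\<alpha>(i := Suc (\<alpha> i))) x) (at 0)"
    and bound: "\<And>\<alpha> \<beta>. \<exists>C. \<forall>x. (\<Prod>i\<in>UNIV. \<bar>x $ i\<bar> ^ \<beta> i) * norm (D \<alpha> x) \<le> C"
    using assms unfolding schwartz_def by blast
  define g where "g i = D ((\<lambda>_. 0)(i := 1))" for i
  have "\<forall>i. \<exists>C. \<forall>x. norm (g i x) \<le> C"
    using bound[where \<beta>="\<lambda>_. 0"] by (simp add: g_def)
  then obtain C where "\<And>i x. norm (g i x) \<le> C i" by metis
  moreover have "\<And>x i. ((\<lambda>s. f (x + s *\<^sub>R axis i 1)) has_vector_derivative g i x) (at 0)"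
    using deriv[of "\<lambda>_. 0"] \<open>D (\<lambda>_. 0) = f\<close> by (simp add: g_def)
  ultimately show ?thesis
    using lipschitz_on_of_bounded_partial_derivatives lipschitz_on_continuous_on by blast
qed

lemma schwartz_norm_power_bounded:
  fixes f :: "real^'n \<Rightarrow> complex"
  assumes "schwartz f"
  shows "\<exists>K. \<forall>x. norm x ^ N * norm (f x) \<le> K"
proof -
  obtain D :: "('n \<Rightarrow> nat) \<Rightarrow> real^'n \<Rightarrow> complex" where "D (\<lambda>_. 0) = f"
    and bound: "\<And>\<alpha> \<beta>. \<exists>C. \<forall>x. (\<Prod>i\<in>UNIV. \<bar>x $ i\<bar> ^ \<beta> i) * norm (D \<alpha> x) \<le> C"
    using assms unfolding schwartz_def by blast
  have "(\<Prod>j\<in>UNIV. \<bar>x $ j\<bar> ^ ((\<lambda>_. 0)(i := N)) j) = \<bar>x $ i\<bar> ^ N" for x :: "real^'n" and i :: 'n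
    by (simp add: if_distrib prod.If_cases)
  then have "\<forall>i. \<exists>C. \<forall>x. \<bar>x $ i\<bar> ^ N * norm (f x) \<le> C"
    using bound[where \<alpha>="\<lambda>_. 0"] \<open>D (\<lambda>_. 0) = f\<close> by metis
  then obtain C where C: "\<And>i x. \<bar>x $ i\<bar> ^ N * norm (f x) \<le> C i" by metis
  have C_nonneg: "0 \<le> C i" for i
    by (rule order_trans[OF _ C[where x=0]]) simp
  have "norm x ^ N * norm (f x) \<le> real CARD('n) ^ N * (\<Sum>j\<in>UNIV. C j)" for x
  proof -
    have "Max (range (\<lambda>j. \<bar>x $ j\<bar>)) \<in> range (\<lambda>j. \<bar>x $ j\<bar>)"
      by (rule Max_in) auto
    then obtain i where "\<bar>x $ i\<bar> = Max (range (\<lambda>j. \<bar>x $ j\<bar>))"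
      by (metis (no_types, lifting) imageE)
    then have i: "\<bar>x $ j\<bar> \<le> \<bar>x $ i\<bar>" for j by simp
    have "norm x \<le> (\<Sum>j\<in>UNIV. \<bar>x $ j\<bar>)" by (rule norm_le_l1_cart)
    also have "\<dots> \<le> real CARD('n) * \<bar>x $ i\<bar>"
      using sum_mono[where f="\<lambda>j. \<bar>x $ j\<bar>" and g="\<lambda>_. \<bar>x $ i\<bar>"] i by simp
    finally have "norm x ^ N * norm (f x) \<le> (real CARD('n) * \<bar>x $ i\<bar>) ^ N * norm (f x)"
      by (intro mult_right_mono power_mono) auto
    also have "\<dots> = real CARD('n) ^ N * (\<bar>x $ i\<bar> ^ N * norm (f x))"
      by (simp add: power_mult_distrib)
    also have "\<dots> \<le> real CARD('n) ^ N * (\<Sum>j\<in>UNIV. C j)"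
      using C_nonneg by (intro mult_left_mono order_trans[OF C[of x i] member_le_sum[where f=C]]) auto
    finally show ?thesis .
  qed
  then show ?thesis by blast
qed

lemma one_plus_power_le:
  fixes r :: real
  assumes "0 \<le> r"
  shows "(1 + r) ^ N \<le> 2 ^ N * (1 + r ^ N)"
proof (cases "r \<le> 1")
  case True
  then have "(1 + r) ^ N \<le> 2 ^ N" using assms by (intro power_mono) auto
  then show ?thesis using assms by (simp add: algebra_simps add_increasing2)
next
  case False
  then have "(1 + r) ^ N \<le> (2 * r) ^ N" by (intro power_mono) auto
  then show ?thesis using False by (simp add: power_mult_distrib algebra_simps add_increasing)
qed

lemma schwartz_decay:
  fixes f :: "real^'n \<Rightarrow> complex"
  assumes "schwartz f"
  shows "\<exists>K. \<forall>x. (1 + norm x) ^ N * norm (f x) \<le> K"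
proof -
  obtain K0 K where bounds: "\<And>x. norm x ^ 0 * norm (f x) \<le> K0" "\<And>x. norm x ^ N * norm (f x) \<le> K"
    using schwartz_norm_power_bounded[OF assms] by metis
  have "(1 + norm x) ^ N * norm (f x) \<le> 2 ^ N * (K0 + K)" for x
  proof -
    have "(1 + norm x) ^ N * norm (f x) \<le> 2 ^ N * (1 + norm x ^ N) * norm (f x)"
      by (intro mult_right_mono one_plus_power_le) auto
    also have "\<dots> = 2 ^ N * (norm x ^ 0 * norm (f x) + norm x ^ N * norm (f x))"
      by (simp add: algebra_simps)
    also have "\<dots> \<le> 2 ^ N * (K0 + K)"
      by (intro mult_left_mono add_mono bounds) simp
    finally show ?thesis .
  qed
  then show ?thesis by blast
qed

lemma emeasure_lborel_ball_eq:
  fixes c :: "'a::euclidean_space"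
  assumes "0 \<le> r"
  shows "emeasure lborel (ball c r) = ennreal (r ^ DIM('a) * measure lborel (ball (0::'a) 1))"
proof -
  have "emeasure lborel (ball c r) \<noteq> \<infinity>"
    using emeasure_lborel_ball_finite by (rule less_imp_neq)
  then show ?thesis
    unfolding content_ball_conv_unit_ball[OF assms, of c, symmetric] by (intro emeasure_eq_ennreal_measure) simp
qed

lemma integrable_polynomial_decay:
  fixes h :: "'a::euclidean_space \<Rightarrow> real"
  assumes meas: "h \<in> borel_measurable lborel" and nonneg: "\<And>x. 0 \<le> h x"
    and decay: "\<And>x. (1 + norm x) ^ (DIM('a) + 2) * h x \<le> K"
  shows "integrable lborel h"
proof -
  \<comment> \<open>On the shell m \<le> |x| < m + 1, h is at most K/(m + 1)^(d + 2), while the ball of radius m + 1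
    has volume (m + 1)^d V; summing over m gives a convergent series \<Sum> K V/(m + 1)^2.\<close>
  let ?d = "DIM('a)"
  define V where "V = measure lborel (ball (0::'a) 1)"
  define a where "a m = K / (real m + 1) ^ (?d + 2)" for m :: nat
  have "0 \<le> K" by (rule order_trans[OF _ decay[of 0]]) (simp add: nonneg)
  then have a_nonneg: "0 \<le> a m" for m by (simp add: a_def)
  have V_nonneg: "0 \<le> V" by (simp add: V_def)
  have ball_measure: "emeasure lborel (ball (0::'a) r) = ennreal (r ^ ?d * V)" if "0 \<le> r" for r
    using emeasure_lborel_ball_eq[OF that] by (simp add: V_def)
  have dominated: "ennreal (h x) \<le> (\<Sum>m. ennreal (a m) * indicator (ball (0::'a) (real m + 1)) x)" for x
  proof -
    define m where "m = nat \<lfloor>norm x\<rfloor>"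
    have m: "real m \<le> norm x" "norm x < real m + 1"
      by (simp_all add: m_def floor_le_iff)
    have "(real m + 1) ^ (?d + 2) * h x \<le> (1 + norm x) ^ (?d + 2) * h x"
      by (rule mult_right_mono[OF power_mono]) (use m nonneg in auto)
    then have "h x \<le> a m"
      using decay[of x] by (simp add: a_def pos_le_divide_eq mult.commute)
    then have "ennreal (h x) \<le> ennreal (a m) * indicator (ball (0::'a) (real m + 1)) x"
      using m by (simp add: indicator_def ennreal_leI)
    also have "\<dots> \<le> (\<Sum>m. ennreal (a m) * indicator (ball (0::'a) (real m + 1)) x)"
      using sum_le_suminf[OF summableI, of "{m}"] by simp
    finally show ?thesis .
  qed
  have a_ball: "a m * ((real m + 1) ^ ?d * V) = K * V * inverse (real (Suc m) ^ 2)" for m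
  proof -
    have "(real m + 1) ^ (?d + 2) = (real m + 1) ^ ?d * real (Suc m) ^ 2"
      by (simp add: power_add add.commute power2_eq_square)
    then show ?thesis
      by (simp add: a_def divide_inverse power2_eq_square add.commute)
  qed
  have summable_bound: "summable (\<lambda>m. K * V * inverse (real (Suc m) ^ 2))"
    using inverse_power_summable[of 2, where 'a=real] summable_Suc_iff[of "\<lambda>n. inverse (real n ^ 2)"]
    by (intro summable_mult) simp
  have "(\<integral>\<^sup>+x. ennreal (h x) \<partial>lborel)
      \<le> (\<integral>\<^sup>+x. (\<Sum>m. ennreal (a m) * indicator (ball (0::'a) (real m + 1)) x) \<partial>lborel)"
    by (rule nn_integral_mono) (rule dominated)
  also have "\<dots> = (\<Sum>m. ennreal (a m) * emeasure lborel (ball (0::'a) (real m + 1)))"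
    by (subst nn_integral_suminf) (auto simp: nn_integral_cmult_indicator intro!: borel_measurable_times_ennreal borel_measurable_indicator)
  also have "\<dots> = (\<Sum>m. ennreal (K * V * inverse (real (Suc m) ^ 2)))"
    by (simp add: ball_measure ennreal_mult[symmetric] a_nonneg V_nonneg a_ball)
  also have "\<dots> < \<infinity>"
    using \<open>0 \<le> K\<close> V_nonneg by (subst suminf_ennreal2[OF _ summable_bound]) auto
  finally show ?thesis
    using nonneg by (intro integrableI_bounded meas) simp
qed

lemma schwartz_integrable_moment:
  fixes f :: "real^'n \<Rightarrow> complex"
  assumes "schwartz f"
  shows "integrable lborel (\<lambda>\<xi>. (1 + (norm \<xi>)\<^sup>2) * norm (f \<xi>))"
proof -
  obtain K where K: "\<And>\<xi>. (1 + norm \<xi>) ^ (CARD('n) + 4) * norm (f \<xi>) \<le> K"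
    using schwartz_decay[OF assms] by blast
  have "(1 + norm \<xi>) ^ (DIM(real^'n) + 2) * ((1 + (norm \<xi>)\<^sup>2) * norm (f \<xi>)) \<le> K" for \<xi>
  proof -
    have "1 + (norm \<xi>)\<^sup>2 \<le> (1 + norm \<xi>)\<^sup>2"
      by (simp add: power2_sum)
    then have "(1 + norm \<xi>) ^ (CARD('n) + 2) * ((1 + (norm \<xi>)\<^sup>2) * norm (f \<xi>))
        \<le> (1 + norm \<xi>) ^ (CARD('n) + 2) * ((1 + norm \<xi>)\<^sup>2 * norm (f \<xi>))"
      by (intro mult_left_mono mult_right_mono) auto
    also have "\<dots> = (1 + norm \<xi>) ^ (CARD('n) + 4) * norm (f \<xi>)"
      by (simp add: power_add power2_eq_square eval_nat_numeral algebra_simps)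
    finally show ?thesis
      using K[of \<xi>] by simp
  qed
  moreover have "continuous_on UNIV (\<lambda>\<xi>. (1 + (norm \<xi>)\<^sup>2) * norm (f \<xi>))"
    using schwartz_continuous[OF assms] by (intro continuous_intros)
  ultimately show ?thesis
    by (intro integrable_polynomial_decay) (simp_all add: borel_measurable_continuous_onI)
qed

lemma norm_integral_cis_quadratic_phase_diff_le:
  fixes \<theta> :: "'a::euclidean_space \<Rightarrow> complex"
  assumes meas: "\<theta> \<in> borel_measurable lborel"
    and moment: "integrable lborel (\<lambda>\<xi>. (1 + (norm \<xi>)\<^sup>2) * norm (\<theta> \<xi>))"
  shows "norm ((\<integral>\<xi>. cis (2 * pi * (y \<bullet> \<xi> - s * (norm \<xi>)\<^sup>2)) * \<theta> \<xi> \<partial>lborel)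
              - (\<integral>\<xi>. cis (2 * pi * (x \<bullet> \<xi>)) * \<theta> \<xi> \<partial>lborel))
         \<le> 2 * pi * (norm (y - x) + \<bar>s\<bar>) * (\<integral>\<xi>. (1 + (norm \<xi>)\<^sup>2) * norm (\<theta> \<xi>) \<partial>lborel)"
proof -
  define \<delta> where "\<delta> = norm (y - x) + \<bar>s\<bar>"
  have integrable: "integrable lborel (\<lambda>\<xi>. cis (\<phi> \<xi>) * \<theta> \<xi>)" if "\<phi> \<in> borel_measurable lborel" for \<phi>
  proof (rule Bochner_Integration.integrable_bound[OF moment])
    have "cis \<in> borel_measurable borel"
      by (auto intro!: borel_measurable_continuous_onI continuous_intros)
    then show "(\<lambda>\<xi>. cis (\<phi> \<xi>) * \<theta> \<xi>) \<in> borel_measurable lborel"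
      using that meas by (auto intro!: borel_measurable_times measurable_compose[where f=\<phi>])
  qed (auto simp: norm_mult mult_le_cancel_right1 intro!: AE_I2)
  have pointwise: "norm (cis (2 * pi * (y \<bullet> \<xi> - s * (norm \<xi>)\<^sup>2)) * \<theta> \<xi> - cis (2 * pi * (x \<bullet> \<xi>)) * \<theta> \<xi>)
      \<le> 2 * pi * \<delta> * ((1 + (norm \<xi>)\<^sup>2) * norm (\<theta> \<xi>))" for \<xi>
  proof -
    have "2 * norm \<xi> \<le> 1 + (norm \<xi>)\<^sup>2"
      using zero_le_power2[of "norm \<xi> - 1"] by (simp add: power2_diff)
    then have norm_le: "norm \<xi> \<le> 1 + (norm \<xi>)\<^sup>2"
      using norm_ge_zero[of \<xi>] by linarith
    have "\<bar>(y - x) \<bullet> \<xi> - s * (norm \<xi>)\<^sup>2\<bar> \<le> norm (y - x) * norm \<xi> + \<bar>s\<bar> * (norm \<xi>)\<^sup>2"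
      using Cauchy_Schwarz_ineq2[of "y - x" \<xi>] by (intro order_trans[OF abs_triangle_ineq4]) (simp add: abs_mult)
    also have "\<dots> \<le> \<delta> * (1 + (norm \<xi>)\<^sup>2)"
      using norm_le unfolding \<delta>_def distrib_right
      by (intro add_mono mult_left_mono) auto
    finally have "\<bar>2 * pi * (y \<bullet> \<xi> - s * (norm \<xi>)\<^sup>2) - 2 * pi * (x \<bullet> \<xi>)\<bar> \<le> 2 * pi * (\<delta> * (1 + (norm \<xi>)\<^sup>2))"
      by (simp add: abs_mult inner_diff_left right_diff_distrib[symmetric])
    then have "norm (cis (2 * pi * (y \<bullet> \<xi> - s * (norm \<xi>)\<^sup>2)) - cis (2 * pi * (x \<bullet> \<xi>))) * norm (\<theta> \<xi>)
        \<le> 2 * pi * (\<delta> * (1 + (norm \<xi>)\<^sup>2)) * norm (\<theta> \<xi>)"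
      by (intro mult_right_mono order_trans[OF norm_cis_diff_le]) auto
    then show ?thesis
      by (simp add: left_diff_distrib[symmetric] norm_mult mult.assoc)
  qed
  have "(\<integral>\<xi>. cis (2 * pi * (y \<bullet> \<xi> - s * (norm \<xi>)\<^sup>2)) * \<theta> \<xi> \<partial>lborel)
          - (\<integral>\<xi>. cis (2 * pi * (x \<bullet> \<xi>)) * \<theta> \<xi> \<partial>lborel)
      = (\<integral>\<xi>. cis (2 * pi * (y \<bullet> \<xi> - s * (norm \<xi>)\<^sup>2)) * \<theta> \<xi> - cis (2 * pi * (x \<bullet> \<xi>)) * \<theta> \<xi> \<partial>lborel)"
    by (intro Bochner_Integration.integral_diff[symmetric] integrable) auto
  also have "norm \<dots> \<le> (\<integral>\<xi>. 2 * pi * \<delta> * ((1 + (norm \<xi>)\<^sup>2) * norm (\<theta> \<xi>)) \<partial>lborel)"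
    using moment pointwise by (intro Bochner_Integration.integral_norm_bound_integral Bochner_Integration.integrable_diff integrable) auto
  finally show ?thesis
    by (simp add: \<delta>_def)
qed

lemma fourier_uminus: "fourier f (- x) = (\<integral>\<xi>. cis (2 * pi * (x \<bullet> \<xi>)) * f \<xi> \<partial>lborel)"
  by (simp add: fourier_def mult.commute inner_commute)

lemma schwartz_quadratic_phase_integral_near_fourier:
  fixes \<theta> :: "real^'n \<Rightarrow> complex"
  assumes "schwartz \<theta>"
  obtains M where "0 \<le> M"
    and "\<And>x y s. norm ((\<integral>\<xi>. cis (2 * pi * (y \<bullet> \<xi> - s * (norm \<xi>)\<^sup>2)) * \<theta> \<xi> \<partial>lborel) - fourier \<theta> (- x))
                 \<le> 2 * pi * (norm (y - x) + \<bar>s\<bar>) * M"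
proof
  show "0 \<le> (\<integral>\<xi>. (1 + (norm \<xi>)\<^sup>2) * norm (\<theta> \<xi>) \<partial>lborel)"
    by simp
  show "norm ((\<integral>\<xi>. cis (2 * pi * (y \<bullet> \<xi> - s * (norm \<xi>)\<^sup>2)) * \<theta> \<xi> \<partial>lborel) - fourier \<theta> (- x))
      \<le> 2 * pi * (norm (y - x) + \<bar>s\<bar>) * (\<integral>\<xi>. (1 + (norm \<xi>)\<^sup>2) * norm (\<theta> \<xi>) \<partial>lborel)" for x y s
    unfolding fourier_uminus using schwartz_continuous[OF assms] schwartz_integrable_moment[OF assms]
    by (intro norm_integral_cis_quadratic_phase_diff_le) (simp_all add: borel_measurable_continuous_onI)
qed

lemma norm_rescaled_shift_add_time_le:
  fixes \<xi>' :: "'a::real_normed_vector"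
  assumes "0 < \<epsilon>" "1 / \<epsilon> \<le> R" "t \<in> {0<..<1}" "norm \<xi>' \<le> \<epsilon> * R"
  shows "norm ((2 * t / R) *\<^sub>R \<xi>') + \<bar>t / R\<bar> \<le> 3 * \<epsilon>"
proof -
  have "0 < R" "1 \<le> \<epsilon> * R"
    using assms(1,2) by (auto simp: field_simps less_le_trans[of 0 "1 / \<epsilon>"])
  moreover have "t * norm \<xi>' \<le> \<epsilon> * R"
    using mult_right_mono[of t 1 "norm \<xi>'"] assms(3,4) by simp
  ultimately show ?thesis
    using assms(3) by (simp add: field_simps)
qed

theorem lemma2p2:
  fixes \<theta> :: "real^'n \<Rightarrow> complex"
  assumes n2: "CARD('n) \<ge> 2"
    and sch: "schwartz \<theta>"
    and supp: "closure {\<xi>. fourier \<theta> \<xi> \<noteq> 0}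
                 \<subseteq> annulus (4 powr (- real CARD('n) - 3)) (4 * sqrt (real CARD('n)))"
    and one: "\<forall>\<xi> \<in> annulus (4 powr (- real CARD('n) - 2)) (2 * sqrt (real CARD('n))).
                 fourier \<theta> \<xi> = 1"
  shows "\<exists>\<epsilon>1>0. \<forall>\<^sub>F R in at_top.
           \<forall>x \<in> annulus (4 powr (- real CARD('n) - 2)) (2 * sqrt (real CARD('n))).
           \<forall>t \<in> {0<..<1}. \<forall>\<xi>'. norm \<xi>' \<le> \<epsilon>1 * R \<longrightarrow>
             norm ((\<integral>\<xi>. cis (2 * pi * ((x - (2 * t / R) *\<^sub>R \<xi>') \<bullet> \<xi> - (t / R) * (norm \<xi>)\<^sup>2))
                        * \<theta> \<xi> \<partial>lborel) - 1) < 1 / 2"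
proof -
  obtain M where "0 \<le> M" and near_fourier:
    "\<And>x y s. norm ((\<integral>\<xi>. cis (2 * pi * (y \<bullet> \<xi> - s * (norm \<xi>)\<^sup>2)) * \<theta> \<xi> \<partial>lborel) - fourier \<theta> (- x))
               \<le> 2 * pi * (norm (y - x) + \<bar>s\<bar>) * M"
    using schwartz_quadratic_phase_integral_near_fourier[OF sch] by blast
  define \<epsilon> where "\<epsilon> = 1 / (16 * pi * (M + 1))"
  have "0 < \<epsilon>" "16 * pi * \<epsilon> * M = M / (M + 1)"
    using \<open>0 \<le> M\<close> by (simp_all add: \<epsilon>_def add_nonneg_pos)
  then have "16 * pi * \<epsilon> * M \<le> 1"
    using \<open>0 \<le> M\<close> by simp
  have close_to_one: "norm ((\<integral>\<xi>. cis (2 * pi * ((x - (2 * t / R) *\<^sub>R \<xi>') \<bullet> \<xi> - (t / R) * (norm \<xi>)\<^sup>2))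
        * \<theta> \<xi> \<partial>lborel) - 1) < 1 / 2" (is "norm (?I - 1) < _")
    if "1 / \<epsilon> \<le> R" "x \<in> annulus (4 powr (- real CARD('n) - 2)) (2 * sqrt (real CARD('n)))"
      "t \<in> {0<..<1}" "norm \<xi>' \<le> \<epsilon> * R" for R t x \<xi>'
  proof -
    have "fourier \<theta> (- x) = 1" and shift: "norm ((2 * t / R) *\<^sub>R \<xi>') + \<bar>t / R\<bar> \<le> 3 * \<epsilon>"
      using that one norm_rescaled_shift_add_time_le[OF \<open>0 < \<epsilon>\<close>] by (auto simp: annulus_def)
    then have "norm (?I - 1) \<le> 2 * pi * (norm ((2 * t / R) *\<^sub>R \<xi>') + \<bar>t / R\<bar>) * M"
      using near_fourier[of "x - (2 * t / R) *\<^sub>R \<xi>'" "t / R" x] by simp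
    also have "\<dots> \<le> 2 * pi * (3 * \<epsilon>) * M"
      using shift \<open>0 \<le> M\<close> by (intro mult_right_mono mult_left_mono) auto
    also have "\<dots> < 1 / 2"
      using \<open>16 * pi * \<epsilon> * M \<le> 1\<close> by linarith
    finally show ?thesis .
  qed
  show ?thesis
    using \<open>0 < \<epsilon>\<close> close_to_one
    by (intro exI[of _ \<epsilon>]) (auto intro: eventually_mono[OF eventually_ge_at_top[of "1 / \<epsilon>"]])
qed

end
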